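(* Let $n,N\ge1$ be integers, $0<p<1$, $0<\epsilon_1,\epsilon_2<1$, and $\beta>0$ with $L=\beta n$ a positive integer, and suppose $\beta\ge\beta_{\mathsf{Th}}$ and $N\ge N_{\mathsf{Th}}$, where $$\beta_{\mathsf{Th}}=\frac{\log_{2}\left(\dfrac{N\left((1+2p-p^2)^n-1\right)}{(\epsilon_1/2^n)^{1/N}}\right)}{n\left(1-\log_2(1+2p-p^2)\right)},\qquad N_{\mathsf{Th}}=\frac{\log_2\left(\left(1+\frac{\epsilon_2}{2^{n}}\right)^{1/n}-1\right)}{\log_2(p)}.$$ Then in the random model described in the context, the expected number of data comparisons performed by the Data-driven Pruning Algorithm is at most $\mathcal{U}_0=N^2 2^n(1+2p-p^2)^n$.
   Context: Model: $M=2^n$, addresses $C=\{0,1\}^n$; each address $\mathbf{x}$ carries a strand $(\mathbf{x},\mathbf{d})$ with data $\mathbf{d}$ independent uniform on $\{0,1\}^L$. Each strand is sent $N$ times through $\mathsf{BEC}(p)$ (each symbol independently erased to $*$ with probability $p$); $\mathcal{Y}$ is the unordered multiset of all $MN$ reads $(\mathbf{y},\mathbf{d}')$. Words $\mathbf{u},\mathbf{v}\in\{0,1,*\}^\ell$ agree, $\mathbf{u}\cong\mathbf{v}$, if they coincide wherever neither is erased; reads agree if both address and data parts agree. Graph $\mathcal{G}$: bipartite, left vertices $C$, right vertices the reads, edge $\mathbf{x}$–$(\mathbf{y},\mathbf{d}')$ iff $\mathbf{x}\cong\mathbf{y}$; $E_{(\mathbf{y},\mathbf{d}')}$ is the set of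 left neighbours of a read in the current graph, and $\mathcal{N}_{(\mathbf{y},\mathbf{d}')}$ (two-hop neighbourhood) is the set of other reads sharing a left neighbour with $(\mathbf{y},\mathbf{d}')$ in the current graph. Data-driven Pruning Algorithm: Start with no read marked pruned. While fewer than $N2^n$ reads are pruned, choose a not-yet-pruned read $(\tilde{\mathbf{y}},\tilde{\mathbf{d}}')$ minimizing $|\mathcal{N}_{(\tilde{\mathbf{y}},\tilde{\mathbf{d}}')}|$ and call PRUNE on it: mark it pruned; for each read $(\mathbf{y},\mathbf{d}')\in\mathcal{N}_{(\tilde{\mathbf{y}},\tilde{\mathbf{d}}')}$ perform one data comparison, i.e. test $(\mathbf{y},\mathbf{d}')\cong(\tilde{\mathbf{y}},\tilde{\mathbf{d}}')$, and put those passing into a set $\mathcal{T}$; if $|\mathcal{T}|=N-1$, let $\mathcal{X}^*=\bigcap_{(\mathbf{y},\mathbf{d}')\in\mathcal{T}}E_{(\mathbf{y},\mathbf{d}')}$, delete every edge between a read of $\mathcal{T}$ and a left vertex outside $\mathcal{X}^*$, and mark all reads of $\mathcal{T}$ pruned. Afterwards a peeling matching procedure (which performs no data comparisons) is run on the resulting graph. The number of data comparisons is the total number of tests $(\mathbf{y},\mathbf{d}')\cong(\tilde{\mathbf{y}},\tilde{\mathbf{d}}')$ performed in all calls of PRUNE. *)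

theory Defs
  imports "HOL-Probability.Probability"
begin

type_synonym rid = "bool list \<times> nat"   (* read identity: (true address x, copy index j) *)
type_synonym rword = "bool option list \<times> bool option list"  (* (address part, data part); None = erasure * *)
type_synonym gstate = "(rid \<Rightarrow> bool list set) \<times> rid set \<times> nat"
  (* (left neighbours E of each read, set of pruned reads, number of data comparisons so far) *)
type_synonym outcome = "(bool list \<Rightarrow> bool list) \<times> (rid \<Rightarrow> nat \<Rightarrow> bool)"
  (* (data d of each address, erasure pattern of each read; True = erased) *)

definition addrs :: "nat \<Rightarrow> bool list set" where
  "addrs n = {x. length x = n}"

definition reads :: "nat \<Rightarrow> nat \<Rightarrow> rid set" where
  "reads n N = addrs n \<times> {..<N}"

definition agree :: "'a option list \<Rightarrow> 'a option list \<Rightarrow> bool" where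
  "agree u v \<longleftrightarrow> length u = length v \<and>
     (\<forall>i<length u. u ! i = None \<or> v ! i = None \<or> u ! i = v ! i)"

definition ragree :: "rword \<Rightarrow> rword \<Rightarrow> bool" where
  "ragree r s \<longleftrightarrow> agree (fst r) (fst s) \<and> agree (snd r) (snd s)"

definition read_of :: "nat \<Rightarrow> nat \<Rightarrow> outcome \<Rightarrow> rid \<Rightarrow> rword" where
  "read_of n L \<omega> r =
     (map (\<lambda>i. if snd \<omega> r i then None else Some (fst r ! i)) [0..<n],
      map (\<lambda>i. if snd \<omega> r (n + i) then None else Some (fst \<omega> (fst r) ! i)) [0..<L])"

definition outcome_pmf :: "nat \<Rightarrow> nat \<Rightarrow> nat \<Rightarrow> real \<Rightarrow> outcome pmf" where
  "outcome_pmf n N L p =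
     pair_pmf (Pi_pmf (addrs n) [] (\<lambda>_. pmf_of_set {d :: bool list. length d = L}))
              (Pi_pmf (reads n N) (\<lambda>_. False)
                  (\<lambda>_. Pi_pmf {..<n + L} False (\<lambda>_. bernoulli_pmf p)))"

definition init_graph :: "nat \<Rightarrow> (rid \<Rightarrow> rword) \<Rightarrow> rid \<Rightarrow> bool list set" where
  "init_graph n rd r = {x \<in> addrs n. agree (map Some x) (fst (rd r))}"

definition nbhd :: "rid set \<Rightarrow> (rid \<Rightarrow> bool list set) \<Rightarrow> rid \<Rightarrow> rid set" where
  "nbhd R G r = {r' \<in> R. r' \<noteq> r \<and> G r \<inter> G r' \<noteq> {}}"

definition prune :: "rid set \<Rightarrow> nat \<Rightarrow> (rid \<Rightarrow> rword) \<Rightarrow> gstate \<Rightarrow> rid \<Rightarrow> gstate" where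
  "prune R N rd s r =
     (let G = fst s; P = fst (snd s); c = snd (snd s);
          Nb = nbhd R G r;
          T = {r' \<in> Nb. ragree (rd r') (rd r)};
          P1 = insert r P;
          c1 = c + card Nb
      in if card T = N - 1
         then (let X = \<Inter> (G ` T)
               in ((\<lambda>r'. if r' \<in> T then G r' \<inter> X else G r'), P1 \<union> T, c1))
         else (G, P1, c1))"

definition valid_sel :: "rid set \<Rightarrow> (gstate \<Rightarrow> rid) \<Rightarrow> bool" where
  "valid_sel R sel \<longleftrightarrow>
     (\<forall>G P c. R - P \<noteq> {} \<longrightarrow>
        sel (G, P, c) \<in> R - P \<and>
        (\<forall>r \<in> R - P. card (nbhd R G (sel (G, P, c))) \<le> card (nbhd R G r)))"

definition alg_step :: "rid set \<Rightarrow> nat \<Rightarrow> nat \<Rightarrow> (rid \<Rightarrow> rword) \<Rightarrow> (gstate \<Rightarrow> rid) \<Rightarrow> gstate \<Rightarrow> gstate" where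
  "alg_step R N M rd sel s = (if card (fst (snd s)) < M then prune R N rd s (sel s) else s)"

text \<open>Total number of data comparisons of the Data-driven Pruning Algorithm
  (the while loop runs at most N 2^n iterations, since each iteration prunes a new read).
  The selection rule may depend on the observed reads.\<close>
definition comparisons ::
  "nat \<Rightarrow> nat \<Rightarrow> nat \<Rightarrow> ((rid \<Rightarrow> rword) \<Rightarrow> gstate \<Rightarrow> rid) \<Rightarrow> outcome \<Rightarrow> nat" where
  "comparisons n N L sel \<omega> =
     (let R = reads n N; rd = read_of n L \<omega>; M = N * 2 ^ n
      in snd (snd ((alg_step R N M rd (sel rd) ^^ M) (init_graph n rd, {}, 0))))"

end

theory Submission
  imports Defs
begin

(*
  Each call of PRUNE on a read r performs |N_r| comparisons, where N_r is taken in the current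
  graph; edges are only ever deleted and the selected read has not been pruned before, so the
  total is at most the sum of |N_r| over all reads in the initial graph.  Two distinct reads r, r'
  have a common left neighbour only if, at every address position where their true addresses
  differ, at least one of the two copies is erased.  Erasures are independent, so this happens
  with probability (2p - p^2)^k, k being the Hamming distance of the addresses.  Summing over r'
  gives at most N (1 + 2p - p^2)^n, and summing over the N 2^n reads r gives U_0.
*)

lemma finite_addrs: "finite (addrs n)" and card_addrs: "card (addrs n) = 2 ^ n"
  using finite_lists_length_eq[of "UNIV :: bool set" n] card_lists_length_eq[of "UNIV :: bool set" n]
  by (simp_all add: addrs_def)

lemma finite_reads: "finite (reads n N)"
  by (simp add: reads_def finite_addrs)

lemma card_reads: "card (reads n N) = N * 2 ^ n"
  by (simp add: reads_def card_cartesian_product card_addrs)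

lemma pair_pmf_Pi_pmf:
  assumes "finite I"
  shows "map_pmf (\<lambda>(f, g) i. (f i, g i)) (pair_pmf (Pi_pmf I d P) (Pi_pmf I d' Q))
           = Pi_pmf I (d, d') (\<lambda>i. pair_pmf (P i) (Q i))"
proof -
  have "Pi_pmf I (d, d') (\<lambda>i. pair_pmf (P i) (Q i))
      = do {f \<leftarrow> Pi_pmf I d P; g \<leftarrow> Pi_pmf I d' Q;
            return_pmf (\<lambda>i. if i \<in> I then (f i, g i) else (d, d'))}"
    unfolding pair_pmf_def using assms
    by (simp add: Pi_pmf_bind[where d' = d] Pi_pmf_bind[where d' = d'])
  also have "\<dots> = do {f \<leftarrow> Pi_pmf I d P; g \<leftarrow> Pi_pmf I d' Q; return_pmf (\<lambda>i. (f i, g i))}"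
    using set_Pi_pmf_subset[OF assms, of d P] set_Pi_pmf_subset[OF assms, of d' Q]
    by (intro bind_pmf_cong refl) (auto simp: fun_eq_iff)
  finally show ?thesis
    by (simp add: pair_pmf_def map_pmf_def bind_assoc_pmf bind_return_pmf)
qed

lemma Pi_pmf_pair_components:
  assumes "finite A" "x \<in> A" "y \<in> A" "x \<noteq> y"
  shows "map_pmf (\<lambda>f. (f x, f y)) (Pi_pmf A d p) = pair_pmf (p x) (p y)"
proof -
  have A: "A = insert x (A - {x})" using assms by auto
  have "map_pmf (\<lambda>f. (f x, f y)) (Pi_pmf A d p)
      = map_pmf (apsnd (\<lambda>f. f y)) (pair_pmf (p x) (Pi_pmf (A - {x}) d p))"
    using assms
    by (subst A, subst Pi_pmf_insert)
       (auto simp: pmf.map_comp o_def case_prod_unfold apsnd_def map_prod_def)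
  also have "\<dots> = pair_pmf (p x) (p y)"
    using assms by (simp add: pair_map_pmf2[symmetric] Pi_pmf_component)
  finally show ?thesis .
qed

lemma prob_bernoulli_pair_or:
  assumes "0 \<le> p" "p \<le> 1"
  shows "measure_pmf.prob (pair_pmf (bernoulli_pmf p) (bernoulli_pmf p)) {(a, b). a \<or> b}
           = 2 * p - p ^ 2"
proof -
  have "{(a, b). a \<or> b} = {(True, True), (True, False), (False, True)}" by auto
  then show ?thesis
    using assms by (simp add: measure_measure_pmf_finite pmf_pair power2_eq_square algebra_simps)
qed

lemma nbhd_subset: "nbhd R G r \<subseteq> R"
  unfolding nbhd_def by blast

lemma nbhd_mono: "(\<And>r'. G r' \<subseteq> G' r') \<Longrightarrow> nbhd R G r \<subseteq> nbhd R G' r"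
  unfolding nbhd_def by blast

lemma prune_result:
  obtains G' P' where "prune R N rd (G, P, c) r = (G', P', c + card (nbhd R G r))"
    and "\<And>r'. G' r' \<subseteq> G r'" and "insert r P \<subseteq> P'" and "P' \<subseteq> insert r P \<union> nbhd R G r"
proof -
  let ?T = "{r' \<in> nbhd R G r. ragree (rd r') (rd r)}"
  show thesis
  proof (cases "card ?T = N - 1")
    case True
    show thesis
      by (rule that[of "\<lambda>r'. if r' \<in> ?T then G r' \<inter> \<Inter> (G ` ?T) else G r'" "insert r P \<union> ?T"])
         (use True in \<open>auto simp: prune_def Let_def\<close>)
  next
    case False
    show thesis
      by (rule that[of G "insert r P"]) (use False in \<open>auto simp: prune_def Let_def\<close>)
  qed
qed

definition pruning_invariant :: "rid set \<Rightarrow> (rid \<Rightarrow> bool list set) \<Rightarrow> gstate \<Rightarrow> bool" where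
  "pruning_invariant R G0 s \<longleftrightarrow> (case s of (G, P, c) \<Rightarrow>
     P \<subseteq> R \<and> (\<forall>r. G r \<subseteq> G0 r) \<and> c \<le> (\<Sum>r\<in>P. card (nbhd R G0 r)))"

lemma pruning_invariant_prune:
  assumes "finite R" and inv: "pruning_invariant R G0 (G, P, c)" and r: "r \<in> R - P"
  shows "pruning_invariant R G0 (prune R N rd (G, P, c) r)"
proof -
  obtain G' P' where eq: "prune R N rd (G, P, c) r = (G', P', c + card (nbhd R G r))"
    and G': "\<And>r'. G' r' \<subseteq> G r'" and P': "insert r P \<subseteq> P'" "P' \<subseteq> insert r P \<union> nbhd R G r"
    using prune_result[of R N rd G P c r] by blast
  have PR: "P \<subseteq> R" and G: "\<And>r'. G r' \<subseteq> G0 r'" and c: "c \<le> (\<Sum>r\<in>P. card (nbhd R G0 r))"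
    using inv by (auto simp: pruning_invariant_def)
  have "finite P" using PR \<open>finite R\<close> finite_subset by blast
  have P'R: "P' \<subseteq> R" using P'(2) PR r nbhd_subset by blast
  have "card (nbhd R G r) \<le> card (nbhd R G0 r)"
    by (intro card_mono finite_subset[OF nbhd_subset \<open>finite R\<close>] nbhd_mono G)
  then have "c + card (nbhd R G r) \<le> (\<Sum>r\<in>insert r P. card (nbhd R G0 r))"
    using c r \<open>finite P\<close> by simp
  also have "\<dots> \<le> (\<Sum>r\<in>P'. card (nbhd R G0 r))"
    using P'(1) P'R \<open>finite R\<close> by (intro sum_mono2) (auto intro: finite_subset)
  moreover have "G' r' \<subseteq> G0 r'" for r'
    using G'[of r'] G[of r'] by blast
  ultimately show ?thesis
    using eq P'R by (simp add: pruning_invariant_def)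
qed

lemma pruning_invariant_alg_step:
  assumes "finite R" "card R = M" "valid_sel R sel" and inv: "pruning_invariant R G0 s"
  shows "pruning_invariant R G0 (alg_step R N M rd sel s)"
proof -
  obtain G P c where s: "s = (G, P, c)" by (cases s)
  show ?thesis
  proof (cases "card P < M")
    case True
    have "P \<subseteq> R" using inv s by (simp add: pruning_invariant_def)
    with True assms(2) have "R - P \<noteq> {}" by auto
    with assms(3) have "sel s \<in> R - P" unfolding valid_sel_def s by blast
    then show ?thesis
      using True assms(1) inv unfolding s alg_step_def by (simp add: pruning_invariant_prune)
  next
    case False
    then show ?thesis using inv unfolding s alg_step_def by simp
  qed
qed

lemma comparisons_le_sum_card_nbhd:
  assumes "valid_sel (reads n N) (sel (read_of n L \<omega>))"
  shows "comparisons n N L sel \<omega>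
           \<le> (\<Sum>r\<in>reads n N. card (nbhd (reads n N) (init_graph n (read_of n L \<omega>)) r))"
proof -
  let ?R = "reads n N" and ?G0 = "init_graph n (read_of n L \<omega>)"
  let ?step = "alg_step ?R N (N * 2 ^ n) (read_of n L \<omega>) (sel (read_of n L \<omega>))"
  have inv: "pruning_invariant ?R ?G0 ((?step ^^ k) (?G0, {}, 0))" for k
  proof (induction k)
    case 0
    then show ?case by (simp add: pruning_invariant_def)
  next
    case (Suc k)
    then show ?case
      using assms finite_reads card_reads by (simp add: pruning_invariant_alg_step)
  qed
  obtain G P c where final: "(?step ^^ (N * 2 ^ n)) (?G0, {}, 0) = (G, P, c)"
    by (rule prod_cases3)
  then have "P \<subseteq> ?R" "c \<le> (\<Sum>r\<in>P. card (nbhd ?R ?G0 r))"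
    using inv[of "N * 2 ^ n"] by (simp_all add: pruning_invariant_def)
  moreover have "(\<Sum>r\<in>P. card (nbhd ?R ?G0 r)) \<le> (\<Sum>r\<in>?R. card (nbhd ?R ?G0 r))"
    using \<open>P \<subseteq> ?R\<close> by (intro sum_mono2 finite_reads) simp_all
  ultimately show ?thesis
    using final unfolding comparisons_def Let_def by simp
qed

definition address_compatible :: "nat \<Rightarrow> (rid \<Rightarrow> nat \<Rightarrow> bool) \<Rightarrow> rid \<Rightarrow> rid \<Rightarrow> bool" where
  "address_compatible n e r r' \<longleftrightarrow> (\<forall>i<n. e r i \<or> e r' i \<or> fst r ! i = fst r' ! i)"

lemma agree_read_address:
  "agree (map Some y) (fst (read_of n L \<omega> r)) \<longleftrightarrow>
     length y = n \<and> (\<forall>i<n. snd \<omega> r i \<or> y ! i = fst r ! i)"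
  by (auto simp: agree_def read_of_def split: if_splits)

lemma nbhd_init_graph_subset:
  "nbhd R (init_graph n (read_of n L \<omega>)) r \<subseteq> (R - {r}) \<inter> {r'. address_compatible n (snd \<omega>) r r'}"
  unfolding nbhd_def init_graph_def address_compatible_def agree_read_address by auto

lemma prob_address_compatible:
  assumes "0 \<le> p" "p \<le> 1" "r \<in> reads n N" "r' \<in> reads n N" "r \<noteq> r'"
  shows "measure_pmf.prob (outcome_pmf n N L p) {\<omega>. address_compatible n (snd \<omega>) r r'}
           = (\<Prod>i<n. if fst r ! i = fst r' ! i then 1 else 2 * p - p ^ 2)"
proof -
  let ?I = "{..<n + L}" and ?B = "pair_pmf (bernoulli_pmf p) (bernoulli_pmf p)"
  define C where
    "C i = (if i < n \<and> fst r ! i \<noteq> fst r' ! i then {(a, b). a \<or> b} else UNIV)" for i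
  have compat_iff: "(\<lambda>i. (e r i, e r' i)) \<in> Pi ?I C \<longleftrightarrow> address_compatible n e r r'" for e
  proof -
    have "(\<lambda>i. (e r i, e r' i)) \<in> Pi ?I C
        \<longleftrightarrow> (\<forall>i\<in>?I. i < n \<and> fst r ! i \<noteq> fst r' ! i \<longrightarrow> e r i \<or> e r' i)"
      by (simp add: Pi_iff C_def)
    also have "\<dots> \<longleftrightarrow> address_compatible n e r r'"
      unfolding address_compatible_def by auto
    finally show ?thesis .
  qed
  then have event: "{\<omega>. address_compatible n (snd \<omega>) r r'}
      = (\<lambda>\<omega> i. (snd \<omega> r i, snd \<omega> r' i)) -` Pi ?I C"
    by blast
  have joint: "map_pmf (\<lambda>\<omega> i. (snd \<omega> r i, snd \<omega> r' i)) (outcome_pmf n N L p)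
      = Pi_pmf ?I (False, False) (\<lambda>_. ?B)"
  proof -
    have "map_pmf (\<lambda>\<omega> i. (snd \<omega> r i, snd \<omega> r' i)) (outcome_pmf n N L p)
        = map_pmf (\<lambda>(f, g) i. (f i, g i))
            (map_pmf (\<lambda>e. (e r, e r')) (map_pmf snd (outcome_pmf n N L p)))"
      by (simp add: pmf.map_comp o_def)
    also have "\<dots> = Pi_pmf ?I (False, False) (\<lambda>_. ?B)"
      unfolding outcome_pmf_def map_snd_pair_pmf
      using assms finite_reads by (simp add: Pi_pmf_pair_components pair_pmf_Pi_pmf)
    finally show ?thesis .
  qed
  have "measure_pmf.prob (outcome_pmf n N L p) {\<omega>. address_compatible n (snd \<omega>) r r'}
      = measure_pmf.prob (map_pmf (\<lambda>\<omega> i. (snd \<omega> r i, snd \<omega> r' i)) (outcome_pmf n N L p)) (Pi ?I C)"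
    unfolding event by simp
  also have "\<dots> = measure_pmf.prob (Pi_pmf ?I (False, False) (\<lambda>_. ?B)) (Pi ?I C)"
    unfolding joint ..
  also have "\<dots> = (\<Prod>i\<in>?I. measure_pmf.prob ?B (C i))"
    by (rule measure_Pi_pmf_Pi) simp
  also have "\<dots> = (\<Prod>i<n. if fst r ! i = fst r' ! i then 1 else 2 * p - p ^ 2)"
    using assms by (intro prod.mono_neutral_cong_right) (auto simp: C_def prob_bernoulli_pair_or)
  finally show ?thesis .
qed

lemma sum_addrs_prod:
  fixes g :: "nat \<Rightarrow> bool \<Rightarrow> 'a :: comm_semiring_1"
  shows "(\<Sum>x\<in>addrs n. \<Prod>i<n. g i (x ! i)) = (\<Prod>i<n. g i True + g i False)"
proof -
  have "(\<Prod>i<n. g i True + g i False) = (\<Prod>i<n. \<Sum>b\<in>UNIV. g i b)"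
    by (simp add: UNIV_bool add.commute)
  also have "\<dots> = (\<Sum>h\<in>PiE {..<n} (\<lambda>_. UNIV). \<Prod>i<n. g i (h i))"
    by (rule prod_sum_PiE) simp_all
  also have "\<dots> = (\<Sum>x\<in>addrs n. \<Prod>i<n. g i (x ! i))"
    by (rule sum.reindex_bij_witness[of _ "\<lambda>x. restrict (nth x) {..<n}" "\<lambda>h. map h [0..<n]"])
       (auto simp: addrs_def PiE_def extensional_def list_eq_iff_nth_eq fun_eq_iff)
  finally show ?thesis ..
qed

lemma sum_reads_mismatch_weight:
  fixes s :: "'a :: comm_semiring_1"
  shows "(\<Sum>r'\<in>reads n N. \<Prod>i<n. if x ! i = fst r' ! i then 1 else s) = of_nat N * (1 + s) ^ n"
proof -
  have "(\<Sum>r'\<in>reads n N. \<Prod>i<n. if x ! i = fst r' ! i then 1 else s)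
      = (\<Sum>x'\<in>addrs n. \<Sum>j<N. \<Prod>i<n. if x ! i = x' ! i then 1 else s)"
    unfolding reads_def by (subst sum.cartesian_product) (simp add: case_prod_unfold)
  also have "\<dots> = of_nat N * (\<Sum>x'\<in>addrs n. \<Prod>i<n. if x ! i = x' ! i then 1 else s)"
    by (simp add: sum_distrib_left)
  also have "(\<Sum>x'\<in>addrs n. \<Prod>i<n. if x ! i = x' ! i then 1 else s) = (\<Prod>i<n. 1 + s)"
    by (subst sum_addrs_prod) (intro prod.cong refl; simp add: add.commute)
  finally show ?thesis by simp
qed

lemma comparisons_le_compatible_pairs:
  assumes "valid_sel (reads n N) (sel (read_of n L \<omega>))"
  shows "real (comparisons n N L sel \<omega>)
           \<le> (\<Sum>r\<in>reads n N. \<Sum>r'\<in>reads n N - {r}.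
                 indicator {\<omega>. address_compatible n (snd \<omega>) r r'} \<omega>)"
proof -
  let ?R = "reads n N"
  have "comparisons n N L sel \<omega> \<le> (\<Sum>r\<in>?R. card (nbhd ?R (init_graph n (read_of n L \<omega>)) r))"
    using assms by (rule comparisons_le_sum_card_nbhd)
  also have "\<dots> \<le> (\<Sum>r\<in>?R. card ((?R - {r}) \<inter> {r'. address_compatible n (snd \<omega>) r r'}))"
    by (intro sum_mono card_mono nbhd_init_graph_subset) (simp add: finite_reads)
  finally have "real (comparisons n N L sel \<omega>)
      \<le> real (\<Sum>r\<in>?R. card ((?R - {r}) \<inter> {r'. address_compatible n (snd \<omega>) r r'}))"
    by (simp only: of_nat_le_iff)
  then show ?thesis
    by (simp add: indicator_def finite_reads)
qed

lemma expected_comparisons_le: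
  assumes "0 \<le> p" "p \<le> 1" "\<And>rd. valid_sel (reads n N) (sel rd)"
  shows "measure_pmf.expectation (outcome_pmf n N L p) (\<lambda>\<omega>. real (comparisons n N L sel \<omega>))
           \<le> (\<Sum>r\<in>reads n N. \<Sum>r'\<in>reads n N - {r}.
                 \<Prod>i<n. if fst r ! i = fst r' ! i then 1 else 2 * p - p ^ 2)"
proof -
  let ?R = "reads n N" and ?M = "outcome_pmf n N L p"
  let ?C = "\<lambda>r r'. {\<omega>. address_compatible n (snd \<omega>) r r'}"
  have "measure_pmf.expectation ?M (\<lambda>\<omega>. real (comparisons n N L sel \<omega>))
      \<le> measure_pmf.expectation ?M (\<lambda>\<omega>. \<Sum>r\<in>?R. \<Sum>r'\<in>?R - {r}. indicator (?C r r') \<omega>)"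
    by (rule integral_mono'[OF _ comparisons_le_compatible_pairs[OF assms(3)]])
       (auto intro!: Bochner_Integration.integrable_sum sum_nonneg
             simp: integrable_indicator_iff less_top[symmetric])
  also have "\<dots> = (\<Sum>r\<in>?R. \<Sum>r'\<in>?R - {r}. measure_pmf.prob ?M (?C r r'))"
    by (simp add: Bochner_Integration.integral_sum Bochner_Integration.integrable_sum
                  integrable_indicator_iff less_top[symmetric])
  also have "\<dots> = (\<Sum>r\<in>?R. \<Sum>r'\<in>?R - {r}. \<Prod>i<n. if fst r ! i = fst r' ! i then 1 else 2 * p - p ^ 2)"
    using assms(1,2) by (intro sum.cong refl prob_address_compatible) auto
  finally show ?thesis .
qed

theorem lemma6:
  fixes n N L :: nat and p \<epsilon>1 \<epsilon>2 \<beta> :: real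
    and sel :: "(rid \<Rightarrow> rword) \<Rightarrow> gstate \<Rightarrow> rid"
  assumes "n \<ge> 1" and "N \<ge> 1"
    and "0 < p" and "p < 1"
    and "0 < \<epsilon>1" and "\<epsilon>1 < 1" and "0 < \<epsilon>2" and "\<epsilon>2 < 1"
    and "\<beta> > 0" and "L > 0" and "real L = \<beta> * real n"
    and "\<beta> \<ge> log 2 (real N * ((1 + 2 * p - p ^ 2) ^ n - 1) / (\<epsilon>1 / 2 ^ n) powr (1 / real N))
              / (real n * (1 - log 2 (1 + 2 * p - p ^ 2)))"
    and "real N \<ge> log 2 ((1 + \<epsilon>2 / 2 ^ n) powr (1 / real n) - 1) / log 2 p"
    and "\<forall>rd. valid_sel (reads n N) (sel rd)"
  shows "measure_pmf.expectation (outcome_pmf n N L p) (\<lambda>\<omega>. real (comparisons n N L sel \<omega>))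
           \<le> real N ^ 2 * 2 ^ n * (1 + 2 * p - p ^ 2) ^ n"
proof -
  let ?R = "reads n N" and ?s = "2 * p - p ^ 2"
  have "0 \<le> ?s" using \<open>0 < p\<close> \<open>p < 1\<close> by (simp add: power2_eq_square)
  have "measure_pmf.expectation (outcome_pmf n N L p) (\<lambda>\<omega>. real (comparisons n N L sel \<omega>))
      \<le> (\<Sum>r\<in>?R. \<Sum>r'\<in>?R - {r}. \<Prod>i<n. if fst r ! i = fst r' ! i then 1 else ?s)"
    using \<open>0 < p\<close> \<open>p < 1\<close> assms(14) by (intro expected_comparisons_le) auto
  also have "\<dots> \<le> (\<Sum>r\<in>?R. \<Sum>r'\<in>?R. \<Prod>i<n. if fst r ! i = fst r' ! i then 1 else ?s)"
    using \<open>0 \<le> ?s\<close> by (intro sum_mono sum_mono2 finite_reads prod_nonneg) auto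
  also have "\<dots> = real N ^ 2 * 2 ^ n * (1 + 2 * p - p ^ 2) ^ n"
    by (simp add: sum_reads_mismatch_weight card_reads power2_eq_square algebra_simps)
  finally show ?thesis .
qed

end
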